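(* Let $n,k\in\mathbb Z$, $\widetilde w(s,t)=w(1-s-t,t)^{-1}$ and $\breve w(s,t)=w(s,1-s-t)^{-1}$. Then: (1) if $0\le k\le n$, $\binom nk_w=\binom nk_w$; (2) if $n<0\le k$, $\binom nk_w=(-1)^k\binom{k-n-1}{k}_{\breve w}\prod_{j=1}^kW(j,-j)$; (3) if $k\le n<0$, $\binom nk_w=(-1)^{n-k}\binom{-k-1}{-n-1}_{\widetilde w}\prod_{j=1}^{n-k}W(n+1-j,j)^{-1}$; (4) if $0\le n<k$, $\binom nk_w=0$; (5) if $n<k<0$, $\binom nk_w=0$; (6) if $k<0\le n$, $\binom nk_w=0$.
   Context: $(w(s,t))_{s,t\in\mathbb Z}$ are commuting invertible variables. Product convention: $\prod_{j=l}^m A_j=A_l\cdots A_m$ if $m>l-1$, $=1$ if $m=l-1$, $=A_{l-1}^{-1}\cdots A_{m+1}^{-1}$ if $m<l-1$. For any weight family $v$, $W_v(s,t)=\prod_{j=1}^t v(s,j)$ (and $W=W_w$), and $\binom{n}{k}_v$ ($n,k\in\mathbb Z$) is the unique family with $\binom{n}{0}_v=\binom{n}{n}_v=1$ for all $n$ and $\binom{n+1}{k}_v=\binom{n}{k}_v+\binom{n}{k-1}_vW_v(k,n+1-k)$ whenever $(n+1,k)\ne(0,0)$. *)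

theory Defs
  imports Main
begin

definition prodc :: "(int \<Rightarrow> 'a::field) \<Rightarrow> int \<Rightarrow> int \<Rightarrow> 'a" where
  "prodc f l m = (if m \<ge> l - 1 then (\<Prod>j\<in>{l..m}. f j)
                  else (\<Prod>j\<in>{m+1..l-1}. inverse (f j)))"

definition Wt :: "(int \<Rightarrow> int \<Rightarrow> 'a::field) \<Rightarrow> int \<Rightarrow> int \<Rightarrow> 'a" where
  "Wt v s t = prodc (\<lambda>j. v s j) 1 t"

definition is_wbinom :: "(int \<Rightarrow> int \<Rightarrow> 'a::field) \<Rightarrow> (int \<Rightarrow> int \<Rightarrow> 'a) \<Rightarrow> bool" where
  "is_wbinom v B \<longleftrightarrow>
     (\<forall>n. B n 0 = 1) \<and> (\<forall>n. B n n = 1) \<and>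
     (\<forall>n k. (n + 1, k) \<noteq> (0, 0) \<longrightarrow>
        B (n + 1) k = B n k + B n (k - 1) * Wt v k (n + 1 - k))"

definition wbinom :: "(int \<Rightarrow> int \<Rightarrow> 'a::field) \<Rightarrow> int \<Rightarrow> int \<Rightarrow> 'a" where
  "wbinom v = (THE B. is_wbinom v B)"

definition wtilde :: "(int \<Rightarrow> int \<Rightarrow> 'a::field) \<Rightarrow> int \<Rightarrow> int \<Rightarrow> 'a" where
  "wtilde w s t = inverse (w (1 - s - t) t)"

definition wbreve :: "(int \<Rightarrow> int \<Rightarrow> 'a::field) \<Rightarrow> int \<Rightarrow> int \<Rightarrow> 'a" where
  "wbreve w s t = inverse (w s (1 - s - t))"

end

theory Submission
  imports Defs
begin

text \<open>Build the family explicitly: rows n \<ge> 0 by the weighted Pascal recurrence, rows n < 0 by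
  the right-hand sides of (2) and (3) (and 0 elsewhere). The sign and the products of W are what
  convert the recurrence of the breve- resp. tilde-weighted coefficients, taken in the row
  k - n - 1 resp. the column -n - 1, into the recurrence for w. Since the weights are invertible,
  the recurrence together with column 0 and the diagonal determines every entry (negative columns
  by solving for the left neighbour, positive columns by moving along the column from the
  diagonal), so the explicit family is the weighted binomial.\<close>

lemma prodc_0 [simp]: "prodc f 1 0 = 1"
  by (simp add: prodc_def)

lemma prodc_succ:
  assumes "l - 1 \<le> m"
  shows "prodc f l (m + 1) = prodc f l m * f (m + 1)"
proof -
  have "{l..m + 1} = insert (m + 1) {l..m}" using assms by auto
  with assms show ?thesis by (simp add: prodc_def mult.commute)
qed

lemma Wt_0 [simp]: "Wt v s 0 = 1"
  by (simp add: Wt_def)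

lemma Wt_succ: "0 \<le> t \<Longrightarrow> Wt v s (t + 1) = Wt v s t * v s (t + 1)"
  by (simp add: Wt_def prodc_succ)

lemma Wt_pred:
  assumes "t \<le> 0"
  shows "Wt v s (t - 1) = Wt v s t * inverse (v s t)"
proof -
  have "{t..0} = insert t {t + 1..0}" using assms by auto
  with assms show ?thesis by (simp add: Wt_def prodc_def mult.commute)
qed

lemma Wt_nonzero: "\<forall>s t. v s t \<noteq> 0 \<Longrightarrow> Wt v s t \<noteq> 0"
  by (simp add: Wt_def prodc_def)

lemma Wt_wbreve:
  assumes "0 \<le> k" and "0 \<le> t"
  shows "Wt (wbreve v) k t * Wt v k (- k) = Wt v k (- k - t)"
  using \<open>0 \<le> t\<close>
proof (induction t rule: int_ge_induct)
  case base
  show ?case by simp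
next
  case (step t)
  have "Wt (wbreve v) k (t + 1) = Wt (wbreve v) k t * inverse (v k (- k - t))"
    using step.hyps by (simp add: Wt_succ wbreve_def)
  moreover have "Wt v k (- k - (t + 1)) = Wt v k (- k - t) * inverse (v k (- k - t))"
    using Wt_pred[of "- k - t" v k] assms step.hyps by (simp add: algebra_simps)
  ultimately show ?case using step.IH by (simp add: algebra_simps)
qed

lemma prodc_inverse_Wt_shift:
  assumes nz: "\<forall>s t. v s t \<noteq> 0" and "0 \<le> L"
  shows "prodc (\<lambda>j. inverse (Wt v (M + 1 - j) j)) 1 L
       = Wt (wtilde v) (- M) L * prodc (\<lambda>j. inverse (Wt v (M - j) j)) 1 L * Wt v (M - L) L"
  using \<open>0 \<le> L\<close>
proof (induction L rule: int_ge_induct)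
  case base
  show ?case by simp
next
  case (step L)
  have f: "prodc (\<lambda>j. inverse (Wt v (M + 1 - j) j)) 1 (L + 1)
      = prodc (\<lambda>j. inverse (Wt v (M + 1 - j) j)) 1 L * inverse (Wt v (M - L) (L + 1))"
    using step.hyps by (simp add: prodc_succ)
  have g: "prodc (\<lambda>j. inverse (Wt v (M - j) j)) 1 (L + 1)
      = prodc (\<lambda>j. inverse (Wt v (M - j) j)) 1 L * inverse (Wt v (M - (L + 1)) (L + 1))"
    using step.hyps by (simp add: prodc_succ)
  have t: "Wt (wtilde v) (- M) (L + 1) = Wt (wtilde v) (- M) L * inverse (v (M - L) (L + 1))"
    using Wt_succ[OF step.hyps, of "wtilde v" "- M"] by (simp add: wtilde_def)
  have w: "Wt v (M - L) (L + 1) = Wt v (M - L) L * v (M - L) (L + 1)"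
    using step.hyps by (simp add: Wt_succ)
  have "v (M - L) (L + 1) \<noteq> 0" "Wt v (M - L) L \<noteq> 0" "Wt v (M - (L + 1)) (L + 1) \<noteq> 0"
    using nz Wt_nonzero[OF nz] by auto
  then show ?case
    unfolding f g t w step.IH by (simp add: field_simps)
qed

fun wpascal :: "(int \<Rightarrow> int \<Rightarrow> 'a::field) \<Rightarrow> nat \<Rightarrow> int \<Rightarrow> 'a" where
  "wpascal v 0 k = (if k = 0 then 1 else 0)"
| "wpascal v (Suc n) k = wpascal v n k + wpascal v n (k - 1) * Wt v k (int n + 1 - k)"

lemma wpascal_eq_0: "k < 0 \<or> int n < k \<Longrightarrow> wpascal v n k = 0"
  by (induction n arbitrary: k) auto

lemma wpascal_n_0 [simp]: "wpascal v n 0 = 1"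
  by (induction n) (auto simp: wpascal_eq_0)

lemma wpascal_n_n [simp]: "wpascal v n (int n) = 1"
  by (induction n) (auto simp: wpascal_eq_0)

definition refl_breve :: "(int \<Rightarrow> int \<Rightarrow> 'a::field) \<Rightarrow> int \<Rightarrow> int \<Rightarrow> 'a" where
  "refl_breve v n k =
     (-1) ^ nat k * wpascal (wbreve v) (nat (k - n - 1)) k * prodc (\<lambda>j. Wt v j (- j)) 1 k"

definition refl_tilde :: "(int \<Rightarrow> int \<Rightarrow> 'a::field) \<Rightarrow> int \<Rightarrow> int \<Rightarrow> 'a" where
  "refl_tilde v n k =
     (-1) ^ nat (n - k) * wpascal (wtilde v) (nat (- k - 1)) (- n - 1)
     * prodc (\<lambda>j. inverse (Wt v (n + 1 - j) j)) 1 (n - k)"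

lemma minus_one_power_nat_succ: "0 \<le> m \<Longrightarrow> (-1::'a::ring_1) ^ nat (m + 1) = - ((-1) ^ nat m)"
  by (simp add: nat_add_distrib)

lemma refl_breve_rec:
  assumes "n < 0" and "0 < k"
  shows "refl_breve v (n + 1) k = refl_breve v n k + refl_breve v n (k - 1) * Wt v k (n + 1 - k)"
proof -
  define m where "m = nat (k - n - 2)"
  define P where "P = prodc (\<lambda>j. Wt v j (- j)) 1"
  have "nat (k - n - 1) = Suc m" and "int m + 1 - k = - (n + 1)"
    using assms by (auto simp: m_def)
  then have row: "wpascal (wbreve v) (nat (k - n - 1)) k
      = wpascal (wbreve v) m k + wpascal (wbreve v) m (k - 1) * Wt (wbreve v) k (- (n + 1))"
    by (simp only: wpascal.simps)
  have "P k = P (k - 1) * Wt v k (- k)"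
    using prodc_succ[of 1 "k - 1"] assms by (simp add: P_def)
  moreover have "(-1::'a) ^ nat k = - ((-1) ^ nat (k - 1))"
    using minus_one_power_nat_succ[of "k - 1"] assms by simp
  moreover have "Wt (wbreve v) k (- (n + 1)) * Wt v k (- k) = Wt v k (n + 1 - k)"
    using Wt_wbreve[of k "- (n + 1)" v] assms by (simp add: algebra_simps)
  moreover have "nat (k - (n + 1) - 1) = m" "nat (k - 1 - n - 1) = m"
    by (simp_all add: m_def)
  ultimately show ?thesis
    unfolding refl_breve_def P_def[symmetric] row by (simp add: algebra_simps)
qed

lemma refl_tilde_rec:
  assumes nz: "\<forall>s t. v s t \<noteq> 0" and "n < 0" and "k \<le> n"
  shows "refl_tilde v (n + 1) k = refl_tilde v n k + refl_tilde v n (k - 1) * Wt v k (n + 1 - k)"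
proof -
  define m where "m = nat (- k - 1)"
  define Q where "Q = prodc (\<lambda>j. inverse (Wt v (n + 1 - j) j)) 1"
  define A where "A = wpascal (wtilde v) m (- n - 1)"
  define B where "B = wpascal (wtilde v) m (- (n + 1) - 1)"
  define s where "s = (-1::'a) ^ nat (n - k)"
  have "nat (- (k - 1) - 1) = Suc m" and "int m + 1 - (- n - 1) = n - k + 1"
    and "- n - 1 - 1 = - (n + 1) - 1"
    using assms by (auto simp: m_def)
  then have row: "wpascal (wtilde v) (nat (- (k - 1) - 1)) (- n - 1)
      = A + B * Wt (wtilde v) (- n - 1) (n - k + 1)"
    by (simp only: wpascal.simps A_def B_def)
  have "(-1::'a) ^ nat (n + 1 - k) = - s" "(-1::'a) ^ nat (n - (k - 1)) = - s"
    using minus_one_power_nat_succ[of "n - k"] assms by (simp_all add: s_def algebra_simps)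
  moreover have "Q (n - k + 1) = Q (n - k) * inverse (Wt v k (n - k + 1))"
    using prodc_succ[of 1 "n - k" "\<lambda>j. inverse (Wt v (n + 1 - j) j)"] assms by (simp add: Q_def)
  moreover have "prodc (\<lambda>j. inverse (Wt v (n + 1 + 1 - j) j)) 1 (n + 1 - k)
      = Wt (wtilde v) (- n - 1) (n - k + 1) * Q (n - k + 1) * Wt v k (n - k + 1)"
  proof -
    have "0 \<le> n - k + 1" "n + 1 - k = n - k + 1" "- (n + 1) = - n - 1" "n + 1 - (n - k + 1) = k"
      using assms by simp_all
    then show ?thesis
      using prodc_inverse_Wt_shift[OF nz, of "n - k + 1" "n + 1"] by (simp only: Q_def)
  qed
  moreover have "Wt v k (n - k + 1) \<noteq> 0"
    using Wt_nonzero[OF nz] .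
  ultimately show ?thesis
    unfolding refl_tilde_def Q_def[symmetric] row m_def[symmetric] A_def[symmetric] B_def[symmetric]
      s_def[symmetric]
    by (simp add: field_simps)
qed

definition wbinom_explicit :: "(int \<Rightarrow> int \<Rightarrow> 'a::field) \<Rightarrow> int \<Rightarrow> int \<Rightarrow> 'a" where
  "wbinom_explicit v n k =
     (if 0 \<le> n then wpascal v (nat n) k
      else if 0 \<le> k then refl_breve v n k
      else if k \<le> n then refl_tilde v n k
      else 0)"

lemma wbinom_explicit_n_0: "wbinom_explicit v n 0 = 1"
  by (simp add: wbinom_explicit_def refl_breve_def)

lemma wbinom_explicit_n_n: "wbinom_explicit v n n = 1"
  using wpascal_n_n[of v "nat n"] wpascal_n_n[of "wtilde v" "nat (- n - 1)"]
  by (cases "0 \<le> n") (simp_all add: wbinom_explicit_def refl_tilde_def)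

text \<open>Formulas (2) and (3) remain valid (as 0 = 0) on the nonnegative rows outside the triangle,
  which lets row 0 be treated together with the negative rows.\<close>

lemma wbinom_explicit_eq_refl_breve:
  "0 \<le> k \<Longrightarrow> n < k \<Longrightarrow> wbinom_explicit v n k = refl_breve v n k"
  by (simp add: wbinom_explicit_def refl_breve_def wpascal_eq_0)

lemma wbinom_explicit_eq_refl_tilde:
  "k < 0 \<Longrightarrow> k \<le> n \<Longrightarrow> wbinom_explicit v n k = refl_tilde v n k"
  by (simp add: wbinom_explicit_def refl_tilde_def wpascal_eq_0)

lemma wbinom_explicit_eq_0: "k < 0 \<Longrightarrow> n < k \<Longrightarrow> wbinom_explicit v n k = 0"
  by (simp add: wbinom_explicit_def)

lemma wbinom_explicit_rec:
  assumes nz: "\<forall>s t. v s t \<noteq> 0" and "(n + 1, k) \<noteq> (0, 0)"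
  shows "wbinom_explicit v (n + 1) k
       = wbinom_explicit v n k + wbinom_explicit v n (k - 1) * Wt v k (n + 1 - k)"
proof (cases "0 \<le> n")
  case True
  then have "nat (n + 1) = Suc (nat n)" by simp
  with True show ?thesis by (simp add: wbinom_explicit_def)
next
  case False
  consider "0 < k" | "k = 0" | "n + 1 < k" "k < 0" | "k = n + 1" | "k \<le> n"
    by linarith
  then show ?thesis
  proof cases
    case 1
    with False show ?thesis
      using refl_breve_rec[of n k v] by (simp add: wbinom_explicit_eq_refl_breve)
  next
    case 2
    with False assms(2) show ?thesis
      by (simp add: wbinom_explicit_n_0 wbinom_explicit_eq_0)
  next
    case 3
    then show ?thesis by (simp add: wbinom_explicit_eq_0)
  next
    case 4
    with False assms(2) show ?thesis
      by (simp add: wbinom_explicit_n_n wbinom_explicit_eq_0)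
  next
    case 5
    with False show ?thesis
      using refl_tilde_rec[OF nz, of n k] by (simp add: wbinom_explicit_eq_refl_tilde)
  qed
qed

lemma wbinom_rec_homogeneous_eq_0:
  assumes nz: "\<forall>s t. v s t \<noteq> 0"
    and col0: "\<And>n. D n 0 = 0" and diag: "\<And>n. D n n = 0"
    and rec: "\<And>n k. (n + 1, k) \<noteq> (0, 0) \<Longrightarrow> D (n + 1) k = D n k + D n (k - 1) * Wt v k (n + 1 - k)"
  shows "D n k = 0"
proof -
  have neg: "\<forall>n. D n k = 0" if "k \<le> 0" for k
    using that
  proof (induction k rule: int_le_induct)
    case base
    show ?case by (simp add: col0)
  next
    case (step k)
    show ?case
    proof
      fix n
      show "D n (k - 1) = 0"
      proof (cases "(n + 1, k) = (0, 0)")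
        case True
        then have "n = -1" "k = 0" by simp_all
        with diag[of "-1"] show ?thesis by simp
      next
        case False
        then have "D n (k - 1) * Wt v k (n + 1 - k) = 0"
          using rec[OF False] step.IH by simp
        with Wt_nonzero[OF nz] show ?thesis by simp
      qed
    qed
  qed
  have pos: "\<forall>n. D n k = 0" if "0 \<le> k" for k
    using that
  proof (induction k rule: int_ge_induct)
    case base
    show ?case by (simp add: col0)
  next
    case (step k)
    have shift: "D (n + 1) (k + 1) = D n (k + 1)" for n
      using rec[of n "k + 1"] step by simp
    show ?case
    proof
      fix n
      show "D n (k + 1) = 0"
        by (induction n rule: int_induct[where k = "k + 1"])
          (use diag shift[of "i - 1" for i] in \<open>simp_all add: shift\<close>)
    qed
  qed
  show ?thesis
    using neg[of k] pos[of k] by force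
qed

lemma is_wbinom_unique:
  assumes nz: "\<forall>s t. v s t \<noteq> 0" and "is_wbinom v B" and "is_wbinom v B'"
  shows "B = B'"
proof -
  have "B n k - B' n k = 0" for n k
    by (rule wbinom_rec_homogeneous_eq_0[OF nz, where D = "\<lambda>n k. B n k - B' n k"])
      (use assms(2,3) in \<open>auto simp: is_wbinom_def algebra_simps\<close>)
  then show ?thesis by auto
qed

lemma wbinom_eq_explicit:
  assumes nz: "\<forall>s t. v s t \<noteq> 0"
  shows "wbinom v = wbinom_explicit v"
proof -
  have "is_wbinom v (wbinom_explicit v)"
    unfolding is_wbinom_def
    using wbinom_explicit_n_0 wbinom_explicit_n_n wbinom_explicit_rec[OF nz] by blast
  then show ?thesis
    unfolding wbinom_def using is_wbinom_unique[OF nz] by blast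
qed

theorem proposition1:
  fixes w :: "int \<Rightarrow> int \<Rightarrow> 'a::field" and n k :: int
  assumes "\<forall>s t. w s t \<noteq> 0"
  shows "(0 \<le> k \<and> k \<le> n \<longrightarrow> wbinom w n k = wbinom w n k)
    \<and> (n < 0 \<and> 0 \<le> k \<longrightarrow>
         wbinom w n k = (-1) ^ nat k * wbinom (wbreve w) (k - n - 1) k
                        * prodc (\<lambda>j. Wt w j (- j)) 1 k)
    \<and> (k \<le> n \<and> n < 0 \<longrightarrow>
         wbinom w n k = (-1) ^ nat (n - k) * wbinom (wtilde w) (- k - 1) (- n - 1)
                        * prodc (\<lambda>j. inverse (Wt w (n + 1 - j) j)) 1 (n - k))
    \<and> (0 \<le> n \<and> n < k \<longrightarrow> wbinom w n k = 0)
    \<and> (n < k \<and> k < 0 \<longrightarrow> wbinom w n k = 0)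
    \<and> (k < 0 \<and> 0 \<le> n \<longrightarrow> wbinom w n k = 0)"
proof -
  have "\<forall>s t. wbreve w s t \<noteq> 0" and "\<forall>s t. wtilde w s t \<noteq> 0"
    using assms by (simp_all add: wbreve_def wtilde_def)
  note explicit =
    wbinom_eq_explicit[OF assms] wbinom_eq_explicit[OF this(1)] wbinom_eq_explicit[OF this(2)]
  show ?thesis
    unfolding explicit
    by (auto simp: wbinom_explicit_def refl_breve_def refl_tilde_def wpascal_eq_0)
qed

end
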